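(* Let $n\ge1$, $m\ge1$ be integers, $q=\exp\bigl(\tfrac{2\pi i}{m+n+1}\bigr)$, and consider $$\partial^{n+1}y+(-1)^n\,(x^m+\lambda^{n+1})\,y=0,\qquad \partial=\tfrac{d}{dx},\ \lambda\in\mathbb{C}.$$ Let $y(x,\lambda)$ be a solution of this equation for each $\lambda$ (in the paper: the solution subdominant as $x\to\infty$ in the sector $|\arg x|\le\pi/(m+n+1)$), set $y_k(x,\lambda)=q^{nk/2}\,y(xq^{-k},\lambda q^k)$ for $k\in\mathbb{Z}$ (each is again a solution), and assume that for every $k$ the functions $y_k,y_{k+1},\dots,y_{k+n}$ are linearly independent. Let $\Phi_k$ be the $(n+1)\times(n+1)$ matrix whose $(i+1,j+1)$ entry is $\partial^i y_{k+j}$ ($0\le i,j\le n$), and for $\ell\ge1$ let $S^{(\ell)}_k$ be the constant matrix with $\Phi_k=\Phi_{k+\ell}S^{(\ell)}_k$; write $S^{(\ell)}(\lambda)$ for $S^{(\ell)}_0$ regarded as a function of $\lambda$, so that $S^{(\ell)}_k=S^{(\ell)}(\lambda q^k)$, and let $S^{(\ell)}_{i,j}(\lambda)$ denote its entries. Define $T^{(1)}_\ell(\lambda)=S^{(\ell)}_{1,1}(\lambda q^{-(\ell-1)/2})$ for $\ell\ge1$, $T^{(1)}_0=1$, $T^{(1)}_\ell=0$ for $\ell<0$. For a Young diagram $\mu=(\mu_1,\mu_2,\dots)$ with transpose $\mu'$ define $$T_\mu(\lambda)=\det_{1\le i,j\le\mu'_1}\Bigl(T^{(1)}_{\mu_i-i+j}\bigl(\lambda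 q^{-(\mu'_1-\mu_1+\mu_i-i-j+1)/2}\bigr)\Bigr).$$ Then for every $\ell\ge1$ and every $1\le k\le n+1$, $$S^{(\ell)}_{k,1}(\lambda)=(-1)^{k+1}\,T_\mu\bigl(q^{(\ell+k-2)/2}\lambda\bigr),$$ where $\mu=(\ell,1,\dots,1)$ is the hook-shaped Young diagram of first row length $\ell$ and height $k$.
   Context: Fractional powers $q^{s}$ mean $\exp\bigl(\tfrac{2\pi i s}{m+n+1}\bigr)$. The Stokes matrix $S^{(1)}_k$ connects the fundamental systems $\Phi_k$ and $\Phi_{k+1}$; the generalized Stokes matrix $S^{(\ell)}_k$ connects $\Phi_k$ and $\Phi_{k+\ell}$. *)

theory Defs
  imports "HOL-Analysis.Complex_Analysis_Basics" "Jordan_Normal_Form.Determinant"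
begin

text \<open>Fractional powers of q = exp(2 pi i/(m+n+1)): qpow n m s = exp(2 pi i s/(m+n+1)).\<close>
definition qpow :: "nat \<Rightarrow> nat \<Rightarrow> real \<Rightarrow> complex" where
  "qpow n m s = exp (2 * of_real pi * \<i> * of_real s / of_nat (m + n + 1))"

definition ysh :: "nat \<Rightarrow> nat \<Rightarrow> (complex \<Rightarrow> complex \<Rightarrow> complex) \<Rightarrow> int \<Rightarrow> complex \<Rightarrow> complex \<Rightarrow> complex" where
  "ysh n m y k x lam =
     qpow n m (real n * of_int k / 2) * y (x * qpow n m (- of_int k)) (lam * qpow n m (of_int k))"

definition Phi :: "nat \<Rightarrow> nat \<Rightarrow> (complex \<Rightarrow> complex \<Rightarrow> complex) \<Rightarrow> int \<Rightarrow> complex \<Rightarrow> complex \<Rightarrow> complex mat" where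
  "Phi n m y k lam x = mat (n+1) (n+1) (\<lambda>(i,j). (deriv ^^ i) (\<lambda>z. ysh n m y (k + int j) z lam) x)"

definition Stokes :: "nat \<Rightarrow> nat \<Rightarrow> (complex \<Rightarrow> complex \<Rightarrow> complex) \<Rightarrow> nat \<Rightarrow> int \<Rightarrow> complex \<Rightarrow> complex mat" where
  "Stokes n m y l k lam = (THE S. S \<in> carrier_mat (n+1) (n+1) \<and>
      (\<forall>x. Phi n m y k lam x = Phi n m y (k + int l) lam x * S))"

definition Sfun :: "nat \<Rightarrow> nat \<Rightarrow> (complex \<Rightarrow> complex \<Rightarrow> complex) \<Rightarrow> nat \<Rightarrow> complex \<Rightarrow> complex mat" where
  "Sfun n m y l lam = Stokes n m y l 0 lam"

definition T1 :: "nat \<Rightarrow> nat \<Rightarrow> (complex \<Rightarrow> complex \<Rightarrow> complex) \<Rightarrow> int \<Rightarrow> complex \<Rightarrow> complex" where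
  "T1 n m y l lam =
    (if l \<ge> 1 then Sfun n m y (nat l) (lam * qpow n m (- (of_int l - 1) / 2)) $$ (0,0)
     else if l = 0 then 1 else 0)"

text \<open>Young diagram mu as the list of its (positive) row lengths mu_1 >= mu_2 >= ...;
  mu'_1 = length mu. Matrix indices below are 0-based (i0 = i-1, j0 = j-1).\<close>
definition young_diagram :: "nat list \<Rightarrow> bool" where
  "young_diagram mu \<longleftrightarrow> sorted_wrt (\<ge>) mu \<and> 0 \<notin> set mu"

definition Tmu :: "nat \<Rightarrow> nat \<Rightarrow> (complex \<Rightarrow> complex \<Rightarrow> complex) \<Rightarrow> nat list \<Rightarrow> complex \<Rightarrow> complex" where
  "Tmu n m y mu lam = (let r = length mu in
     det (mat r r (\<lambda>(i,j).
       T1 n m y (int (mu ! i) - int (i+1) + int (j+1))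
          (lam * qpow n m (- (real r - real (mu ! 0) + real (mu ! i)
                               - real (i+1) - real (j+1) + 1) / 2)))))"

definition hook :: "nat \<Rightarrow> nat \<Rightarrow> nat list" where
  "hook l k = l # replicate (k - 1) 1"

end

theory Submission
  imports Defs "HOL-Complex_Analysis.Cauchy_Integral_Formula"
begin

(* Since q^(m+n+1) = 1, every y_k solves the same equation, so n+2 consecutive y_k are linearly
  dependent, and S^(l)_k is already determined by the relations y_(k+j) = sum_p S_(p,j) y_(k+l+p)
  between the functions themselves. These compose as S^(a+b)_k = S^(b)_(k+a) S^(a)_k, and S^(1)_k
  shifts the basis outside its first column. Hence the first row of S^(b)_s is (h(b-j, s+j))_j with
  h(p,t) = S^(p)_t(1,1), a rescaled T^(1)_p, and the first entry of S^(l+j)_0 = S^(j)_l S^(l)_0 reads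
  h(l+j,0) = sum_p h(j-p,l+p) S^(l)_(p,1). This says that the hook matrix is G U, where G has the
  first column of S^(l) as its first row and ones on its subdiagonal, and U = (h(j-i,l+i)) is upper
  unitriangular; expanding det G along its last column leaves (-1)^(k-1) S^(l)_(k,1). *)

lemma qpow_add: "qpow n m a * qpow n m b = qpow n m (a + b)"
  unfolding qpow_def by (simp add: exp_add[symmetric] add_divide_distrib distrib_left distrib_right)

lemma qpow_mult_qpow: "a + b = c \<Longrightarrow> z * qpow n m a * qpow n m b = z * qpow n m c"
  by (simp add: mult.assoc qpow_add)

lemma qpow_0 [simp]: "qpow n m 0 = 1"
  unfolding qpow_def by simp

lemma qpow_of_int_power_period: "qpow n m (of_int j) ^ (m + n + 1) = 1"
proof -
  have "(of_nat (m + n + 1) :: complex) \<noteq> 0"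
    by (metis add_eq_0_iff_both_eq_0 of_nat_eq_0_iff one_neq_zero)
  then have "of_nat (m + n + 1) * (2 * of_real pi * \<i> * of_real (of_int j) / of_nat (m + n + 1))
      = (2 * of_int j * pi * \<i> :: complex)"
    by simp
  then have "qpow n m (of_int j) ^ (m + n + 1) = exp (2 * of_int j * pi * \<i>)"
    unfolding qpow_def exp_of_nat_mult[symmetric] by metis
  then show ?thesis
    using exp_integer_2pi[of "of_int j"] by (simp add: mult_ac)
qed

lemma higher_deriv_sum:
  fixes f :: "'i \<Rightarrow> complex \<Rightarrow> complex"
  assumes "finite I" "\<And>i. i \<in> I \<Longrightarrow> f i holomorphic_on S" "open S" "z \<in> S"
  shows "(deriv ^^ p) (\<lambda>x. \<Sum>i\<in>I. c i * f i x) z = (\<Sum>i\<in>I. c i * (deriv ^^ p) (f i) z)"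
  using assms
proof (induction I rule: finite_induct)
  case (insert a I)
  have "(deriv ^^ p) (\<lambda>x. c a * f a x + (\<Sum>i\<in>I. c i * f i x)) z
      = (deriv ^^ p) (\<lambda>x. c a * f a x) z + (deriv ^^ p) (\<lambda>x. \<Sum>i\<in>I. c i * f i x) z"
    using insert.prems by (intro higher_deriv_add) (auto intro!: holomorphic_intros)
  moreover have "(deriv ^^ p) (\<lambda>x. c a * f a x) z = c a * (deriv ^^ p) (f a) z"
    using insert.prems by (intro higher_deriv_cmult) auto
  ultimately show ?case
    using insert by simp
qed simp

lemma higher_deriv_cmult_compose_scale:
  fixes f :: "complex \<Rightarrow> complex"
  assumes "f holomorphic_on UNIV"
  shows "(deriv ^^ p) (\<lambda>z. A * f (z * w)) x = A * w ^ p * (deriv ^^ p) f (x * w)"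
proof -
  have "(\<lambda>z. f (w * z)) holomorphic_on UNIV"
    using holomorphic_on_compose[of "\<lambda>z. w * z" UNIV f, unfolded o_def] assms
    by (auto intro: holomorphic_intros holomorphic_on_subset)
  then have "(deriv ^^ p) (\<lambda>z. A * f (w * z)) x = A * (deriv ^^ p) (\<lambda>z. f (w * z)) x"
    by (rule higher_deriv_cmult[OF _ UNIV_I open_UNIV])
  also have "(deriv ^^ p) (\<lambda>z. f (w * z)) x = w ^ p * (deriv ^^ p) f (w * x)"
    by (rule higher_deriv_compose_linear[OF assms open_UNIV open_UNIV UNIV_I]) auto
  finally show ?thesis
    by (simp add: mult.commute mult.assoc)
qed

lemma entire_linear_ode_zero_initial_data:
  fixes g P :: "complex \<Rightarrow> complex"
  assumes g: "g holomorphic_on UNIV" and P: "P holomorphic_on UNIV"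
    and ode: "\<And>x. (deriv ^^ Suc n) g x = P x * g x"
    and init: "\<And>i. i \<le> n \<Longrightarrow> (deriv ^^ i) g c = 0"
  shows "g x = 0"
proof -
  have "(deriv ^^ i) g c = 0" for i
  proof (induction i rule: less_induct)
    case (less i)
    show ?case
    proof (cases "i \<le> n")
      case False
      then obtain r where r: "i = r + Suc n"
        by (metis add.commute le_Suc_ex not_less_eq_eq)
      have "(deriv ^^ Suc n) g = (\<lambda>x. P x * g x)"
        using ode by auto
      then have "(deriv ^^ i) g c = (deriv ^^ r) (\<lambda>x. P x * g x) c"
        unfolding r funpow_add by simp
      also have "\<dots> = (\<Sum>j = 0..r. of_nat (r choose j) * (deriv ^^ j) P c * (deriv ^^ (r-j)) g c)"
        using P g by (intro higher_deriv_mult) auto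
      also have "\<dots> = 0"
        using less r by (intro sum.neutral) auto
      finally show ?thesis .
    qed (use init in auto)
  qed
  then show ?thesis
    using holomorphic_fun_eq_0_on_connected[OF g] by auto
qed

(* The (n+1) x (n+2) matrix of initial data, padded by a zero row, is singular. *)
lemma entire_linear_ode_solutions_dependent:
  fixes f :: "nat \<Rightarrow> complex \<Rightarrow> complex" and P :: "complex \<Rightarrow> complex"
  assumes f: "\<And>j. f j holomorphic_on UNIV" and P: "P holomorphic_on UNIV"
    and ode: "\<And>j x. (deriv ^^ Suc n) (f j) x = P x * f j x"
  shows "\<exists>c. (\<exists>j\<le>Suc n. c j \<noteq> 0) \<and> (\<forall>x. (\<Sum>j\<le>Suc n. c j * f j x) = 0)"
proof -
  define A where "A = mat (n+2) (n+2) (\<lambda>(i,j). if i \<le> n then (deriv ^^ i) (f j) 0 else 0)"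
  have A: "A \<in> carrier_mat (n+2) (n+2)"
    unfolding A_def by simp
  have "Determinant.det A = (\<Sum>j<n+2. A $$ (n+1,j) * Determinant.cofactor A (n+1) j)"
    by (rule laplace_expansion_row[OF A]) simp
  also have "\<dots> = 0"
    unfolding A_def by (intro sum.neutral) auto
  finally obtain v where v: "v \<in> carrier_vec (n+2)" "v \<noteq> 0\<^sub>v (n+2)" "A *\<^sub>v v = 0\<^sub>v (n+2)"
    using det_0_iff_vec_prod_zero[OF A] by blast
  define g where "g x = (\<Sum>j\<le>Suc n. vec_index v j * f j x)" for x
  have "g x = 0" for x
  proof (rule entire_linear_ode_zero_initial_data[where g = g and c = 0])
    show "g holomorphic_on UNIV"
      unfolding g_def using f by (auto intro!: holomorphic_intros)
    show "(deriv ^^ Suc n) g x = P x * g x" for x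
    proof -
      have "(deriv ^^ Suc n) g x = (\<Sum>j\<le>Suc n. vec_index v j * (deriv ^^ Suc n) (f j) x)"
        unfolding g_def using f by (intro higher_deriv_sum) auto
      then show ?thesis
        unfolding g_def by (simp add: ode sum_distrib_left mult_ac del: funpow.simps sum.atMost_Suc)
    qed
    show "(deriv ^^ i) g 0 = 0" if "i \<le> n" for i
    proof -
      have "(deriv ^^ i) g 0 = (\<Sum>j\<le>Suc n. vec_index v j * (deriv ^^ i) (f j) 0)"
        unfolding g_def using f by (intro higher_deriv_sum) auto
      also have "\<dots> = vec_index (A *\<^sub>v v) i"
        using v(1) that unfolding A_def
        by (auto simp: scalar_prod_def mult_ac atLeast0LessThan lessThan_Suc_atMost intro!: sum.cong)
      finally show ?thesis
        using v(3) that by simp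
    qed
  qed (rule P)
  moreover have "\<exists>j\<le>Suc n. vec_index v j \<noteq> 0"
    using v(1,2) by (auto simp: vec_eq_iff less_Suc_eq_le)
  ultimately show ?thesis
    unfolding g_def by blast
qed

lemma sum_atMost_delta_mult:
  fixes F :: "nat \<Rightarrow> 'a::comm_ring_1"
  assumes "a \<le> n"
  shows "(\<Sum>p\<le>n. (if p = a then 1 else 0) * F p) = F a"
proof -
  have "(\<Sum>p\<le>n. (if p = a then 1 else 0) * F p) = (\<Sum>p\<le>n. if p = a then F p else 0)"
    by (rule sum.cong) auto
  then show ?thesis
    using assms by (simp add: sum.delta)
qed

lemma index_mult_mat_atMost:
  assumes "dim_col A = Suc n" "dim_row B = Suc n" "i < dim_row A" "j < dim_col B"
  shows "(A * B) $$ (i,j) = (\<Sum>p\<le>n. A $$ (i,p) * B $$ (p,j))"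
  using assms by (auto simp: scalar_prod_def atLeast0LessThan lessThan_Suc_atMost intro!: sum.cong)

lemma det_first_row_subdiagonal_ones:
  fixes v :: "nat \<Rightarrow> 'a::comm_ring_1"
  assumes k: "1 \<le> k"
  shows "Determinant.det (mat k k (\<lambda>(i,j). if i = 0 then v j else if j + 1 = i then 1 else 0))
           = (-1)^(k-1) * v (k-1)"
proof -
  define G where "G = (mat k k (\<lambda>(i,j). if i = 0 then v j else if j + 1 = i then 1 else 0) :: 'a mat)"
  have G: "G \<in> carrier_mat k k"
    unfolding G_def by simp
  have "Determinant.det G = (\<Sum>i<k. G $$ (i,k-1) * Determinant.cofactor G i (k-1))"
    using k by (intro laplace_expansion_column[OF G]) simp
  also have "\<dots> = G $$ (0,k-1) * Determinant.cofactor G 0 (k-1)"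
    using k by (subst sum.remove[of _ 0]) (auto simp: G_def intro!: sum.neutral)
  also have "mat_delete G 0 (k-1) = 1\<^sub>m (k-1)"
    by (rule eq_matI) (auto simp: mat_delete_def G_def)
  then have "Determinant.cofactor G 0 (k-1) = (-1)^(k-1)"
    by (simp add: Determinant.cofactor_def)
  finally show ?thesis
    using k by (simp add: G_def mult.commute)
qed

lemma hook_nth_0 [simp]: "hook l k ! 0 = l"
  by (simp add: hook_def)

lemma hook_nth_tail: "1 \<le> i \<Longrightarrow> i < k \<Longrightarrow> hook l k ! i = 1"
  by (cases i) (auto simp: hook_def)

lemma length_hook: "1 \<le> k \<Longrightarrow> length (hook l k) = k"
  by (simp add: hook_def)

definition potential :: "nat \<Rightarrow> nat \<Rightarrow> complex \<Rightarrow> complex \<Rightarrow> complex" where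
  "potential n m lam x = - ((-1) ^ n * (x ^ m + lam ^ (n+1)))"

lemma potential_holomorphic: "potential n m lam holomorphic_on UNIV"
  unfolding potential_def by (auto intro!: holomorphic_intros)

lemma ysh_shift:
  "ysh n m y (t + j) x lam = qpow n m (real n * of_int t / 2) *
      ysh n m y j (x * qpow n m (- of_int t)) (lam * qpow n m (of_int t))"
proof -
  have "qpow n m (real n * of_int t / 2) * qpow n m (real n * of_int j / 2)
      = qpow n m (real n * of_int (t+j) / 2)"
    by (simp add: qpow_add field_simps)
  moreover have "x * qpow n m (- of_int t) * qpow n m (- of_int j) = x * qpow n m (- of_int (t+j))"
    and "lam * qpow n m (of_int t) * qpow n m (of_int j) = lam * qpow n m (of_int (t+j))"
    by (simp_all add: mult.assoc qpow_add)
  ultimately show ?thesis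
    unfolding ysh_def by (simp only: mult.assoc[symmetric])
qed

locale stokes_data =
  fixes n m :: nat and y :: "complex \<Rightarrow> complex \<Rightarrow> complex"
  assumes entire: "\<forall>lam. (\<lambda>z. y z lam) holomorphic_on UNIV"
    and ode: "\<forall>lam x. (deriv ^^ (n+1)) (\<lambda>z. y z lam) x
                       + (-1) ^ n * (x ^ m + lam ^ (n+1)) * y x lam = 0"
    and indep: "\<forall>lam k (c :: nat \<Rightarrow> complex).
                  (\<forall>x. (\<Sum>j\<le>n. c j * ysh n m y (k + int j) x lam) = 0) \<longrightarrow> (\<forall>j\<le>n. c j = 0)"
begin

lemma ysh_holomorphic: "(\<lambda>x. ysh n m y j x lam) holomorphic_on UNIV"
proof -
  let ?w = "qpow n m (- of_int j)" and ?mu = "lam * qpow n m (of_int j)"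
  have "(\<lambda>x. y (?w * x) ?mu) holomorphic_on UNIV"
    using holomorphic_on_compose[of "\<lambda>x. ?w * x" UNIV "\<lambda>z. y z ?mu", unfolded o_def] entire
    by (auto intro: holomorphic_intros holomorphic_on_subset)
  then show ?thesis
    unfolding ysh_def by (auto simp: mult.commute intro: holomorphic_intros)
qed

lemma ysh_ode:
  "(deriv ^^ Suc n) (\<lambda>x. ysh n m y j x lam) x = potential n m lam x * ysh n m y j x lam"
proof -
  define w where "w = qpow n m (- of_int j)"
  define mu where "mu = lam * qpow n m (of_int j)"
  define A where "A = qpow n m (real n * of_int j / 2)"
  have ysh: "ysh n m y j x lam = A * y (x * w) mu" for x
    unfolding ysh_def A_def w_def mu_def by simp
  have w_inv: "w * qpow n m (of_int j) = 1" and w_period: "w ^ (m+n+1) = 1"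
    using qpow_of_int_power_period[of n m "-j"] unfolding w_def by (simp_all add: qpow_add)
  have "w ^ Suc n * (x*w) ^ m = x ^ m * w ^ (m+n+1)"
    by (simp add: power_mult_distrib power_add mult_ac)
  moreover have "w ^ Suc n * mu ^ (n+1) = (lam * (w * qpow n m (of_int j))) ^ (n+1)"
    unfolding mu_def by (simp add: power_mult_distrib mult_ac)
  ultimately have rescale: "w ^ Suc n * ((x*w) ^ m + mu ^ (n+1)) = x ^ m + lam ^ (n+1)"
    unfolding distrib_left w_inv w_period by simp
  have "(deriv ^^ Suc n) (\<lambda>x. A * y (x * w) mu) x
      = A * w ^ Suc n * (deriv ^^ Suc n) (\<lambda>z. y z mu) (x * w)"
    using entire by (intro higher_deriv_cmult_compose_scale) auto
  also have "(deriv ^^ Suc n) (\<lambda>z. y z mu) (x * w) = - ((-1) ^ n * ((x*w) ^ m + mu ^ (n+1)) * y (x*w) mu)"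
    using ode[rule_format, of mu "x*w"] by (simp add: eq_neg_iff_add_eq_0)
  also have "A * w ^ Suc n * - ((-1) ^ n * ((x*w) ^ m + mu ^ (n+1)) * y (x*w) mu)
      = - ((-1) ^ n * (w ^ Suc n * ((x*w) ^ m + mu ^ (n+1)))) * (A * y (x*w) mu)"
    by (simp add: mult_ac)
  also have "\<dots> = potential n m lam x * (A * y (x*w) mu)"
    unfolding rescale potential_def ..
  finally show ?thesis
    by (simp only: ysh)
qed

lemma ysh_coeffs_unique:
  assumes "\<forall>x. (\<Sum>p\<le>n. a p * ysh n m y (t + int p) x lam) = (\<Sum>p\<le>n. b p * ysh n m y (t + int p) x lam)"
    and "p \<le> n"
  shows "a p = b p"
proof -
  have "\<forall>x. (\<Sum>j\<le>n. (a j - b j) * ysh n m y (t + int j) x lam) = 0"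
    using assms(1) by (simp add: left_diff_distrib sum_subtractf)
  then show ?thesis
    using indep assms(2) by fastforce
qed

lemma ysh_in_span_next:
  "\<exists>c. \<forall>x. ysh n m y k x lam = (\<Sum>p\<le>n. c p * ysh n m y (k + 1 + int p) x lam)"
proof -
  obtain v where v: "\<exists>j\<le>Suc n. v j \<noteq> 0"
    and dep: "\<And>x. (\<Sum>j\<le>Suc n. v j * ysh n m y (k + int j) x lam) = 0"
    using entire_linear_ode_solutions_dependent[where f = "\<lambda>j x. ysh n m y (k + int j) x lam",
        OF ysh_holomorphic potential_holomorphic ysh_ode]
    by blast
  have split: "(\<Sum>j\<le>Suc n. v j * ysh n m y (k + int j) x lam)
      = v 0 * ysh n m y k x lam + (\<Sum>p\<le>n. v (Suc p) * ysh n m y (k + 1 + int p) x lam)" for x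
    by (simp add: sum.atMost_Suc_shift add.assoc del: sum.atMost_Suc)
  have "v 0 \<noteq> 0"
  proof
    assume "v 0 = 0"
    then have "\<forall>p\<le>n. v (Suc p) = 0"
      using indep[rule_format, where lam = lam and k = "k+1" and c = "\<lambda>p. v (Suc p)"] dep split
      by simp
    with v \<open>v 0 = 0\<close> show False
      by (metis Suc_le_mono not0_implies_Suc)
  qed
  then have "ysh n m y k x lam = (\<Sum>p\<le>n. (- v (Suc p) / v 0) * ysh n m y (k + 1 + int p) x lam)" for x
    using dep[of x] split[of x]
    by (simp add: sum_divide_distrib[symmetric] field_simps sum_negf eq_neg_iff_add_eq_0)
  then show ?thesis
    by (intro exI[of _ "\<lambda>p. - v (Suc p) / v 0"]) blast
qed

definition stokes_rel :: "nat \<Rightarrow> int \<Rightarrow> complex \<Rightarrow> complex mat \<Rightarrow> bool" where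
  "stokes_rel l k lam S \<longleftrightarrow> S \<in> carrier_mat (n+1) (n+1) \<and>
     (\<forall>x. \<forall>j\<le>n. ysh n m y (k + int j) x lam
                 = (\<Sum>p\<le>n. S $$ (p,j) * ysh n m y (k + int l + int p) x lam))"

lemma stokes_rel_0: "stokes_rel 0 k lam (1\<^sub>m (n+1))"
proof -
  have "(\<Sum>p\<le>n. 1\<^sub>m (n+1) $$ (p,j) * ysh n m y (k + int p) x lam) = ysh n m y (k + int j) x lam"
    if "j \<le> n" for j x
  proof -
    have "(\<Sum>p\<le>n. 1\<^sub>m (n+1) $$ (p,j) * ysh n m y (k + int p) x lam)
        = (\<Sum>p\<le>n. (if p = j then 1 else 0) * ysh n m y (k + int p) x lam)"
      using that by (intro sum.cong) auto
    then show ?thesis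
      using that by (simp add: sum_atMost_delta_mult)
  qed
  then show ?thesis
    unfolding stokes_rel_def by simp
qed

lemma stokes_rel_1_exists: "\<exists>S. stokes_rel 1 k lam S"
proof -
  obtain c where c: "\<forall>x. ysh n m y k x lam = (\<Sum>p\<le>n. c p * ysh n m y (k + 1 + int p) x lam)"
    using ysh_in_span_next by blast
  define S where "S = mat (n+1) (n+1) (\<lambda>(p,j). if j = 0 then c p else if p = j - 1 then 1 else 0)"
  have "ysh n m y (k + int j) x lam = (\<Sum>p\<le>n. S $$ (p,j) * ysh n m y (k + 1 + int p) x lam)"
    if j: "j \<le> n" for x j
  proof (cases "j = 0")
    case False
    have "(\<Sum>p\<le>n. S $$ (p,j) * ysh n m y (k + 1 + int p) x lam)
        = (\<Sum>p\<le>n. (if p = j - 1 then 1 else 0) * ysh n m y (k + 1 + int p) x lam)"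
      using False j by (intro sum.cong) (auto simp: S_def)
    also have "\<dots> = ysh n m y (k + int j) x lam"
      using False j by (subst sum_atMost_delta_mult) (auto simp: of_nat_diff)
    finally show ?thesis ..
  qed (use c in \<open>simp add: S_def\<close>)
  then have "stokes_rel 1 k lam S"
    unfolding stokes_rel_def S_def by simp
  then show ?thesis ..
qed

lemma stokes_rel_comp:
  assumes r1: "stokes_rel a k lam S1" and r2: "stokes_rel b (k + int a) lam S2"
  shows "stokes_rel (a+b) k lam (S2 * S1)"
proof -
  have S1: "S1 \<in> carrier_mat (n+1) (n+1)" and S2: "S2 \<in> carrier_mat (n+1) (n+1)"
    using r1 r2 unfolding stokes_rel_def by auto
  have "ysh n m y (k + int j) x lam = (\<Sum>r\<le>n. (S2 * S1) $$ (r,j) * ysh n m y (k + int (a+b) + int r) x lam)"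
    if j: "j \<le> n" for x j
  proof -
    let ?Y = "\<lambda>r. ysh n m y (k + int a + int b + int r) x lam"
    have "ysh n m y (k + int j) x lam = (\<Sum>p\<le>n. S1 $$ (p,j) * ysh n m y (k + int a + int p) x lam)"
      using r1 j unfolding stokes_rel_def by blast
    also have "\<dots> = (\<Sum>p\<le>n. S1 $$ (p,j) * (\<Sum>r\<le>n. S2 $$ (r,p) * ?Y r))"
      using r2 unfolding stokes_rel_def by (intro sum.cong) auto
    also have "\<dots> = (\<Sum>p\<le>n. \<Sum>r\<le>n. S1 $$ (p,j) * (S2 $$ (r,p) * ?Y r))"
      by (simp add: sum_distrib_left)
    also have "\<dots> = (\<Sum>r\<le>n. \<Sum>p\<le>n. S1 $$ (p,j) * (S2 $$ (r,p) * ?Y r))"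
      by (rule sum.swap)
    also have "\<dots> = (\<Sum>r\<le>n. (\<Sum>p\<le>n. S2 $$ (r,p) * S1 $$ (p,j)) * ?Y r)"
      by (simp add: sum_distrib_right mult_ac)
    also have "\<dots> = (\<Sum>r\<le>n. (S2 * S1) $$ (r,j) * ?Y r)"
      using carrier_matD[OF S1] carrier_matD[OF S2] j
      by (intro sum.cong refl) (simp add: index_mult_mat_atMost del: index_mult_mat)
    finally show ?thesis
      by (simp add: add.assoc)
  qed
  with S1 S2 show ?thesis
    unfolding stokes_rel_def by auto
qed

lemma stokes_rel_exists: "\<exists>S. stokes_rel l k lam S"
proof (induction l)
  case 0
  then show ?case
    using stokes_rel_0 by blast
next
  case (Suc l)
  then obtain S1 where "stokes_rel l k lam S1"
    by blast
  moreover obtain S2 where "stokes_rel 1 (k + int l) lam S2"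
    using stokes_rel_1_exists by blast
  ultimately show ?case
    using stokes_rel_comp by fastforce
qed

lemma stokes_rel_unique:
  assumes "stokes_rel l k lam S" "stokes_rel l k lam S'"
  shows "S' = S"
proof (rule eq_matI)
  fix p j
  assume "p < dim_row S" "j < dim_col S"
  then have "p \<le> n" "j \<le> n"
    using assms unfolding stokes_rel_def by auto
  then show "S' $$ (p,j) = S $$ (p,j)"
    using assms unfolding stokes_rel_def
    by (intro ysh_coeffs_unique[of _ "k + int l" lam]) auto
qed (use assms in \<open>auto simp: stokes_rel_def\<close>)

lemma Phi_first_row: "j \<le> n \<Longrightarrow> Phi n m y k lam x $$ (0,j) = ysh n m y (k + int j) x lam"
  by (simp add: Phi_def)

lemma dim_Phi [simp]: "dim_row (Phi n m y k lam x) = n+1" "dim_col (Phi n m y k lam x) = n+1"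
  by (simp_all add: Phi_def)

lemma stokes_rel_iff_Phi:
  "stokes_rel l k lam S \<longleftrightarrow>
     S \<in> carrier_mat (n+1) (n+1) \<and> (\<forall>x. Phi n m y k lam x = Phi n m y (k + int l) lam x * S)"
proof (intro iffI conjI allI; (elim conjE)?)
  assume rel: "stokes_rel l k lam S"
  then show S: "S \<in> carrier_mat (n+1) (n+1)"
    unfolding stokes_rel_def by auto
  fix x
  show "Phi n m y k lam x = Phi n m y (k + int l) lam x * S"
  proof (rule eq_matI)
    fix i j
    assume "i < dim_row (Phi n m y (k + int l) lam x * S)" "j < dim_col (Phi n m y (k + int l) lam x * S)"
    then have i: "i \<le> n" and j: "j \<le> n"
      using S by (auto simp: Phi_def)
    have "(\<lambda>z. ysh n m y (k + int j) z lam) = (\<lambda>z. \<Sum>p\<le>n. S $$ (p,j) * ysh n m y (k + int l + int p) z lam)"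
      using rel j unfolding stokes_rel_def by auto
    then have "Phi n m y k lam x $$ (i,j)
        = (\<Sum>p\<le>n. S $$ (p,j) * (deriv ^^ i) (\<lambda>z. ysh n m y (k + int l + int p) z lam) x)"
      using i j ysh_holomorphic by (simp add: Phi_def) (intro higher_deriv_sum[where S = UNIV]; simp)
    also have "\<dots> = (Phi n m y (k + int l) lam x * S) $$ (i,j)"
      using i j carrier_matD[OF S] by (subst index_mult_mat_atMost) (auto simp: Phi_def mult_ac)
    finally show "Phi n m y k lam x $$ (i,j) = (Phi n m y (k + int l) lam x * S) $$ (i,j)" .
  qed (use S in \<open>auto simp: Phi_def\<close>)
next
  assume S: "S \<in> carrier_mat (n+1) (n+1)" and Phi: "\<forall>x. Phi n m y k lam x = Phi n m y (k + int l) lam x * S"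
  have "ysh n m y (k + int j) x lam = (\<Sum>p\<le>n. S $$ (p,j) * ysh n m y (k + int l + int p) x lam)"
    if "j \<le> n" for x j
    using that Phi[rule_format, of x] carrier_matD[OF S]
    by (simp add: Phi_first_row[symmetric] index_mult_mat_atMost mult.commute del: index_mult_mat)
  with S show "stokes_rel l k lam S"
    unfolding stokes_rel_def by auto
qed

lemma Stokes_eqI: "stokes_rel l k lam S \<Longrightarrow> Stokes n m y l k lam = S"
  unfolding Stokes_def stokes_rel_iff_Phi[symmetric]
  using stokes_rel_unique by blast

lemma stokes_rel_Stokes: "stokes_rel l k lam (Stokes n m y l k lam)"
  using stokes_rel_exists Stokes_eqI by metis

lemma dim_Stokes [simp]:
  "dim_row (Stokes n m y l k lam) = n+1" "dim_col (Stokes n m y l k lam) = n+1"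
  using stokes_rel_Stokes unfolding stokes_rel_def by auto

lemma Stokes_0: "Stokes n m y 0 k lam = 1\<^sub>m (n+1)"
  using stokes_rel_0 Stokes_eqI by blast

lemma Stokes_add: "Stokes n m y (a+b) k lam = Stokes n m y b (k + int a) lam * Stokes n m y a k lam"
  using stokes_rel_comp[OF stokes_rel_Stokes stokes_rel_Stokes] Stokes_eqI by blast

lemma Stokes_1_shift_column:
  assumes "1 \<le> j" "j \<le> n" "p \<le> n"
  shows "Stokes n m y 1 k lam $$ (p,j) = (if p = j - 1 then 1 else 0)"
proof -
  let ?S = "Stokes n m y 1 k lam"
  have "\<forall>x. (\<Sum>q\<le>n. ?S $$ (q,j) * ysh n m y (k + 1 + int q) x lam)
        = (\<Sum>q\<le>n. (if q = j - 1 then 1 else 0) * ysh n m y (k + 1 + int q) x lam)"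
  proof
    fix x
    have "(\<Sum>q\<le>n. ?S $$ (q,j) * ysh n m y (k + 1 + int q) x lam) = ysh n m y (k + int j) x lam"
      using stokes_rel_Stokes[of 1 k lam] assms unfolding stokes_rel_def by simp
    also have "\<dots> = (\<Sum>q\<le>n. (if q = j - 1 then 1 else 0) * ysh n m y (k + 1 + int q) x lam)"
      using assms by (subst sum_atMost_delta_mult) (auto simp: of_nat_diff)
    finally show "(\<Sum>q\<le>n. ?S $$ (q,j) * ysh n m y (k + 1 + int q) x lam)
        = (\<Sum>q\<le>n. (if q = j - 1 then 1 else 0) * ysh n m y (k + 1 + int q) x lam)" .
  qed
  then show ?thesis
    using ysh_coeffs_unique[of "\<lambda>q. ?S $$ (q,j)" "k+1" lam "\<lambda>q. if q = j - 1 then 1 else 0" p] assms(3)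
    by simp
qed

lemma Stokes_rotate: "Stokes n m y l 0 (lam * qpow n m (of_int t)) = Stokes n m y l t lam"
proof (rule Stokes_eqI[symmetric])
  let ?mu = "lam * qpow n m (of_int t)" and ?c = "qpow n m (real n * of_int t / 2)"
    and ?w = "qpow n m (- of_int t)"
  let ?S = "Stokes n m y l 0 ?mu"
  have rel: "stokes_rel l 0 ?mu ?S"
    by (rule stokes_rel_Stokes)
  have "ysh n m y (t + int j) x lam = (\<Sum>p\<le>n. ?S $$ (p,j) * ysh n m y (t + int l + int p) x lam)"
    if j: "j \<le> n" for x j
  proof -
    have "ysh n m y (t + int j) x lam = ?c * ysh n m y (int j) (x * ?w) ?mu"
      by (rule ysh_shift)
    also have "\<dots> = ?c * (\<Sum>p\<le>n. ?S $$ (p,j) * ysh n m y (int l + int p) (x * ?w) ?mu)"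
      using rel j unfolding stokes_rel_def by auto
    also have "\<dots> = (\<Sum>p\<le>n. ?S $$ (p,j) * ysh n m y (t + int l + int p) x lam)"
      by (simp add: sum_distrib_left mult_ac ysh_shift[of n m y t] add.assoc)
    finally show ?thesis .
  qed
  with rel show "stokes_rel l t lam ?S"
    unfolding stokes_rel_def by auto
qed

definition corner :: "complex \<Rightarrow> int \<Rightarrow> int \<Rightarrow> complex" where
  "corner lam p t = (if p \<ge> 1 then Stokes n m y (nat p) t lam $$ (0,0) else if p = 0 then 1 else 0)"

lemma T1_eq_corner: "T1 n m y p (lam * qpow n m (of_int t + (of_int p - 1) / 2)) = corner lam p t"
proof -
  have rotate: "lam * qpow n m (of_int t + (of_int p - 1) / 2) * qpow n m (- (of_int p - 1) / 2)
      = lam * qpow n m (of_int t)"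
    by (rule qpow_mult_qpow) (simp add: field_simps)
  show ?thesis
    unfolding T1_def corner_def Sfun_def rotate Stokes_rotate ..
qed

lemma Stokes_first_row:
  "j \<le> n \<Longrightarrow> Stokes n m y b s lam $$ (0,j) = corner lam (int b - int j) (s + int j)"
proof (induction b arbitrary: s j)
  case 0
  then show ?case
    by (simp add: Stokes_0 corner_def)
next
  case (Suc b)
  show ?case
  proof (cases "j = 0")
    case True
    have "nat (1 + int b) = Suc b"
      by simp
    with True show ?thesis
      by (simp add: corner_def)
  next
    case False
    have "Stokes n m y (Suc b) s lam $$ (0,j)
        = (Stokes n m y b (s + 1) lam * Stokes n m y 1 s lam) $$ (0,j)"
      using Stokes_add[of 1 b s lam] by simp
    also have "\<dots> = (\<Sum>q\<le>n. Stokes n m y b (s + 1) lam $$ (0,q) * Stokes n m y 1 s lam $$ (q,j))"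
      using Suc.prems by (simp add: index_mult_mat_atMost del: index_mult_mat)
    also have "\<dots> = (\<Sum>q\<le>n. (if q = j - 1 then 1 else 0) * Stokes n m y b (s + 1) lam $$ (0,q))"
      using Suc.prems False Stokes_1_shift_column[of j _ s lam] by (intro sum.cong refl) auto
    also have "\<dots> = Stokes n m y b (s + 1) lam $$ (0, j - 1)"
      using Suc.prems by (intro sum_atMost_delta_mult) simp
    also have "\<dots> = corner lam (int b - int (j - 1)) (s + 1 + int (j - 1))"
      using Suc.prems by (intro Suc.IH) simp
    also have "int b - int (j - 1) = int (Suc b) - int j"
      using False by auto
    also have "s + 1 + int (j - 1) = s + int j"
      using False by auto
    finally show ?thesis .
  qed
qed

lemma corner_add:
  assumes "1 \<le> l" "j \<le> n"
  shows "corner lam (int l + int j) 0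
           = (\<Sum>p\<le>n. corner lam (int j - int p) (int l + int p) * Stokes n m y l 0 lam $$ (p,0))"
proof -
  have "corner lam (int l + int j) 0 = (Stokes n m y j (int l) lam * Stokes n m y l 0 lam) $$ (0,0)"
    using assms Stokes_add[of l j 0 lam] by (simp add: corner_def nat_add_distrib add.commute)
  also have "\<dots> = (\<Sum>p\<le>n. Stokes n m y j (int l) lam $$ (0,p) * Stokes n m y l 0 lam $$ (p,0))"
    by (simp add: index_mult_mat_atMost del: index_mult_mat)
  also have "\<dots> = (\<Sum>p\<le>n. corner lam (int j - int p) (int l + int p) * Stokes n m y l 0 lam $$ (p,0))"
    by (intro sum.cong refl) (simp add: Stokes_first_row)
  finally show ?thesis .
qed

lemma Tmu_hook:
  assumes "1 \<le> k"
  shows "Tmu n m y (hook l k) (qpow n m ((real l + real k - 2) / 2) * lam)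
    = Determinant.det (mat k k (\<lambda>(i,j). corner lam (int (hook l k ! i) - int i + int j) (int l - int (hook l k ! i) + int i)))"
proof -
  have arg: "qpow n m ((real l + real k - 2) / 2) * lam
          * qpow n m (- (real k - real (hook l k ! 0) + real (hook l k ! i) - real (i+1) - real (j+1) + 1) / 2)
      = lam * qpow n m (of_int (int l - int (hook l k ! i) + int i)
                          + (of_int (int (hook l k ! i) - int i + int j) - 1) / 2)" for i j
    unfolding mult.commute[of _ lam] hook_nth_0 by (rule qpow_mult_qpow) (simp add: field_simps)
  have idx: "int (hook l k ! i) - int (i+1) + int (j+1) = int (hook l k ! i) - int i + int j" for i j
    by simp
  show ?thesis
    unfolding Tmu_def Let_def length_hook[OF assms] arg idx T1_eq_corner ..
qed

lemma hook_matrix_factor: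
  assumes l: "1 \<le> l" and k: "1 \<le> k" "k \<le> n + 1"
  shows "mat k k (\<lambda>(i,j). corner lam (int (hook l k ! i) - int i + int j) (int l - int (hook l k ! i) + int i))
    = mat k k (\<lambda>(i,j). if i = 0 then Stokes n m y l 0 lam $$ (j,0) else if j + 1 = i then 1 else 0)
      * mat k k (\<lambda>(i,j). corner lam (int j - int i) (int l + int i))"
    (is "?M = ?G * ?U")
proof (rule eq_matI)
  fix i j
  assume "i < dim_row (?G * ?U)" "j < dim_col (?G * ?U)"
  then have i: "i < k" and j: "j < k"
    by auto
  have GU: "(?G * ?U) $$ (i,j) = (\<Sum>q<k. ?G $$ (i,q) * ?U $$ (q,j))"
    using i j by (simp add: scalar_prod_def atLeast0LessThan)
  show "?M $$ (i,j) = (?G * ?U) $$ (i,j)"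
  proof (cases "i = 0")
    case True
    have "?M $$ (i,j) = (\<Sum>p\<le>n. corner lam (int j - int p) (int l + int p) * Stokes n m y l 0 lam $$ (p,0))"
      using True i j k l by (simp add: corner_add)
    also have "\<dots> = (\<Sum>p<k. corner lam (int j - int p) (int l + int p) * Stokes n m y l 0 lam $$ (p,0))"
      using k j by (intro sum.mono_neutral_right) (auto simp: corner_def)
    finally show ?thesis
      unfolding GU using True j by (simp add: mult.commute)
  next
    case False
    have "(?G * ?U) $$ (i,j) = (\<Sum>q<k. if q = i - 1 then ?U $$ (q,j) else 0)"
      unfolding GU using False i j by (intro sum.cong) auto
    also have "\<dots> = ?U $$ (i - 1, j)"
      using i by (simp add: sum.delta)
    finally show ?thesis
      using False i j hook_nth_tail[of i k l] by (simp add: of_nat_diff algebra_simps)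
  qed
qed auto

lemma det_corner_unitriangular: "Determinant.det (mat k k (\<lambda>(i,j). corner lam (int j - int i) (int l + int i))) = 1"
proof -
  let ?U = "mat k k (\<lambda>(i,j). corner lam (int j - int i) (int l + int i))"
  have "upper_triangular ?U"
    unfolding upper_triangular_def by (auto simp: corner_def)
  then have "Determinant.det ?U = prod_list (diag_mat ?U)"
    by (intro det_upper_triangular) auto
  also have "\<dots> = 1"
    by (simp add: prod_list_diag_prod corner_def)
  finally show ?thesis .
qed

end

theorem theorem3:
  fixes n m :: nat and y :: "complex \<Rightarrow> complex \<Rightarrow> complex"
  assumes "n \<ge> 1" and "m \<ge> 1"
    and entire: "\<forall>lam. (\<lambda>z. y z lam) holomorphic_on UNIV"
    and ode: "\<forall>lam x. (deriv ^^ (n+1)) (\<lambda>z. y z lam) x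
                       + (-1) ^ n * (x ^ m + lam ^ (n+1)) * y x lam = 0"
    and indep: "\<forall>lam k (c :: nat \<Rightarrow> complex).
                  (\<forall>x. (\<Sum>j\<le>n. c j * ysh n m y (k + int j) x lam) = 0) \<longrightarrow> (\<forall>j\<le>n. c j = 0)"
    and "l \<ge> 1" and "1 \<le> k" and "k \<le> n + 1"
  shows "Sfun n m y l lam $$ (k - 1, 0)
           = (-1) ^ (k + 1) * Tmu n m y (hook l k) (qpow n m ((real l + real k - 2) / 2) * lam)"
proof -
  interpret stokes_data n m y
    using entire ode indep by unfold_locales
  have "Tmu n m y (hook l k) (qpow n m ((real l + real k - 2) / 2) * lam)
      = Determinant.det (mat k k (\<lambda>(i,j). if i = 0 then Stokes n m y l 0 lam $$ (j,0) else if j + 1 = i then 1 else 0))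
        * Determinant.det (mat k k (\<lambda>(i,j). corner lam (int j - int i) (int l + int i)))"
    using assms(6-8) by (simp add: Tmu_hook hook_matrix_factor det_mult[of _ k])
  also have "\<dots> = (-1) ^ (k - 1) * Sfun n m y l lam $$ (k - 1, 0)"
    using assms(7) by (simp add: det_first_row_subdiagonal_ones det_corner_unitriangular Sfun_def)
  finally show ?thesis
    using assms(7) by (cases k) auto
qed

end
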